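(* Let $n\ge4$ and let $\mathcal{U}\subseteq\mathbb{P}_2(n)$ be an equidistant linear code with constant distance $2$. If $|\mathcal{U}|=2^{n-1}$, then either $\mathcal{U}^{*}$ is a sunflower, or $n=4$ and $\mathcal{U}^{*}=\{Y\in\mathbb{G}_2(4,2): Y\subset T\}$ for some $T\in\mathbb{G}_2(4,3)$.
   Context: $\mathbb{P}_q(n)$ denotes the set of all subspaces of $\mathbb{F}_q^n$ and $\mathbb{G}_q(n,k)$ the set of $k$-dimensional subspaces. For subspaces $X,Y$ the subspace distance is $d_S(X,Y)=\dim X+\dim Y-2\dim(X\cap Y)$. A linear code in $\mathbb{P}_q(n)$ is a subset $\mathcal{U}\subseteq\mathbb{P}_q(n)$ with $\{0\}\in\mathcal{U}$ for which there exists a map $\boxplus:\mathcal{U}\times\mathcal{U}\to\mathcal{U}$ such that (i) $(\mathcal{U},\boxplus)$ is an abelian group; (ii) its identity element is $\{0\}$; (iii) $X\boxplus X=\{0\}$ for all $X\in\mathcal{U}$; (iv) $d_S(Y_1\boxplus X,Y_2\boxplus X)=d_S(Y_1,Y_2)$ for all $Y_1,Y_2,X\in\mathcal{U}$. Its nontrivial part is $\mathcal{U}^*=\mathcal{U}\setminus\{\{0\}\}$. It is equidistant with constant distance $r$ if $d_S(X,Y)=r$ for all distinct $X,Y\in\mathcal{U}$. A family $\mathbb{S}\subseteq\mathbb{G}_q(n,k)$ is a sunflower (with center $C\in\mathbb{G}_q(n,t)$) if $X\cap Y=C$ for all distinct $X,Y\in\mathbb{S}$. *)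

theory Defs
  imports Complex_Main "HOL-Library.Z2" "HOL-Library.Function_Algebras" "HOL-Algebra.Group"
begin

text \<open>The field F_2 is the type bit. Vectors of F_2^n are functions nat => bit
  vanishing outside {0..<n}; scalar multiplication is pointwise.\<close>

definition scaleF2 :: "bit \<Rightarrow> (nat \<Rightarrow> bit) \<Rightarrow> (nat \<Rightarrow> bit)" where
  "scaleF2 c v = (\<lambda>i. c * v i)"

definition F2n :: "nat \<Rightarrow> (nat \<Rightarrow> bit) set" where
  "F2n n = {v. \<forall>i\<ge>n. v i = 0}"

definition P2 :: "nat \<Rightarrow> (nat \<Rightarrow> bit) set set" where
  "P2 n = {X. module.subspace scaleF2 X \<and> X \<subseteq> F2n n}"

definition dimF2 :: "(nat \<Rightarrow> bit) set \<Rightarrow> nat" where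
  "dimF2 X = vector_space.dim scaleF2 X"

definition G2 :: "nat \<Rightarrow> nat \<Rightarrow> (nat \<Rightarrow> bit) set set" where
  "G2 n k = {X \<in> P2 n. dimF2 X = k}"

definition dS :: "(nat \<Rightarrow> bit) set \<Rightarrow> (nat \<Rightarrow> bit) set \<Rightarrow> nat" where
  "dS X Y = dimF2 X + dimF2 Y - 2 * dimF2 (X \<inter> Y)"

definition linear_code :: "nat \<Rightarrow> (nat \<Rightarrow> bit) set set \<Rightarrow> bool" where
  "linear_code n U \<longleftrightarrow> U \<subseteq> P2 n \<and> {0} \<in> U \<and>
     (\<exists>f. comm_group \<lparr>carrier = U, monoid.mult = f, one = {0}\<rparr> \<and>
          (\<forall>X\<in>U. f X X = {0}) \<and>
          (\<forall>Y1\<in>U. \<forall>Y2\<in>U. \<forall>X\<in>U. dS (f Y1 X) (f Y2 X) = dS Y1 Y2))"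

definition equidistant :: "(nat \<Rightarrow> bit) set set \<Rightarrow> nat \<Rightarrow> bool" where
  "equidistant U r \<longleftrightarrow> (\<forall>X\<in>U. \<forall>Y\<in>U. X \<noteq> Y \<longrightarrow> dS X Y = r)"

definition sunflower :: "nat \<Rightarrow> (nat \<Rightarrow> bit) set set \<Rightarrow> bool" where
  "sunflower n S \<longleftrightarrow> (\<exists>k. S \<subseteq> G2 n k) \<and>
     (\<exists>t. \<exists>C\<in>G2 n t. \<forall>X\<in>S. \<forall>Y\<in>S. X \<noteq> Y \<longrightarrow> X \<inter> Y = C)"

end

theory Submission
  imports Defs
begin

(* Distance 2 from {0} and between distinct codewords makes the
  nontrivial codewords 2-dimensional subspaces ("lines") meeting pairwise in 1-dimensional
  ones ("points").  Either all these lines pass through one point, which is a sunflower, or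
  three of them form a triangle; then every line meets the triangle in two distinct points
  and so lies in the 3-dimensional subspace ("plane") spanned by it.  A plane over F_2
  contains at most 7 lines, since each line covers 3 of the 21 pairs of its nonzero vectors,
  whereas |U*| = 2^(n-1) - 1 \<ge> 7.  Hence n = 4 and U* consists of all lines of the plane. *)

interpretation F2: vector_space scaleF2
  by unfold_locales (auto simp: scaleF2_def fun_eq_iff algebra_simps)

lemma add_self_F2 [simp]: "(x :: nat \<Rightarrow> bit) + x = 0"
  by (auto simp: fun_eq_iff)

lemma scaleF2_cases: "scaleF2 c x = 0 \<or> scaleF2 c x = x"
  by (cases "c = 0") (auto simp: scaleF2_def fun_eq_iff)

lemma dimF2_zero [simp]: "dimF2 {0} = 0"
  unfolding dimF2_def
  using F2.dim_span[of "{}"] F2.dim_eq_card_independent[OF F2.independent_empty] by simp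

lemma card_span_insert_F2:
  assumes "finite (F2.span B)" "r \<notin> F2.span B"
  shows "card (F2.span (insert r B)) = 2 * card (F2.span B)"
proof -
  have span_eq: "F2.span (insert r B) = F2.span B \<union> (\<lambda>y. r + y) ` F2.span B"
  proof
    show "F2.span (insert r B) \<subseteq> F2.span B \<union> (\<lambda>y. r + y) ` F2.span B"
    proof
      fix x assume "x \<in> F2.span (insert r B)"
      then obtain k where k: "x - scaleF2 k r \<in> F2.span B"
        unfolding F2.span_insert by auto
      have "x = r + (x - r)" by simp
      then show "x \<in> F2.span B \<union> (\<lambda>y. r + y) ` F2.span B"
        using k scaleF2_cases[of k r] by (metis Un_iff diff_zero image_eqI)
    qed
    show "F2.span B \<union> (\<lambda>y. r + y) ` F2.span B \<subseteq> F2.span (insert r B)"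
      using F2.span_mono[of B "insert r B"] F2.span_add F2.span_base[of r "insert r B"] by blast
  qed
  have "F2.span B \<inter> (\<lambda>y. r + y) ` F2.span B = {}"
  proof (rule ccontr)
    assume "F2.span B \<inter> (\<lambda>y. r + y) ` F2.span B \<noteq> {}"
    then obtain y where "y \<in> F2.span B" "r + y \<in> F2.span B" by auto
    then have "(r + y) + y \<in> F2.span B" using F2.span_add by blast
    then show False using assms(2) by (simp add: add.assoc)
  qed
  moreover have "card ((\<lambda>y. r + y) ` F2.span B) = card (F2.span B)"
    by (rule card_image) (auto simp: inj_on_def)
  ultimately show ?thesis using span_eq assms(1) by (simp add: card_Un_disjoint)
qed

lemma card_span_independent_F2:
  assumes "finite (F2.span B)" "F2.independent B"
  shows "card (F2.span B) = 2 ^ card B"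
proof -
  have "finite B" using assms(1) F2.span_superset finite_subset by blast
  then show ?thesis using assms
  proof (induction B rule: finite_induct)
    case empty
    then show ?case by simp
  next
    case (insert b B)
    have "finite (F2.span B)"
      using insert.prems(1) F2.span_mono[of B "insert b B"] finite_subset by blast
    moreover have "F2.independent B" "b \<notin> F2.span B"
      using insert.prems(2) insert.hyps(2) F2.independent_insert by auto
    ultimately show ?case using insert.IH insert.hyps card_span_insert_F2 by simp
  qed
qed

lemma card_subspace_F2:
  assumes "F2.subspace X" "finite X"
  shows "card X = 2 ^ dimF2 X"
proof -
  obtain B where B: "B \<subseteq> X" "F2.independent B" "X \<subseteq> F2.span B" "card B = F2.dim X"
    using F2.basis_exists by blast
  then have "F2.span B = X" using F2.span_subspace assms(1) by blast
  then show ?thesis using card_span_independent_F2[of B] B assms(2) by (simp add: dimF2_def)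
qed

lemma finite_F2n: "finite (F2n n)"
proof -
  have "F2n n \<subseteq> (\<lambda>S i. if i \<in> S then 1 else 0) ` Pow {..<n}"
  proof
    fix v assume v: "v \<in> F2n n"
    have "v = (\<lambda>i. if i \<in> {i. i < n \<and> v i = 1} then 1 else 0)"
    proof
      fix i show "v i = (if i \<in> {i. i < n \<and> v i = 1} then 1 else 0)"
        using v by (cases "i < n"; cases "v i = 0") (auto simp: F2n_def)
    qed
    then show "v \<in> (\<lambda>S i. if i \<in> S then 1 else 0) ` Pow {..<n}" by blast
  qed
  then show ?thesis by (rule finite_subset) simp
qed

lemma subspace_F2n: "F2.subspace (F2n n)"
  by (auto simp: F2.subspace_def F2n_def scaleF2_def)

lemma finite_G2: "finite (G2 n k)"
proof -
  have "G2 n k \<subseteq> Pow (F2n n)" by (auto simp: G2_def P2_def)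
  then show ?thesis using finite_F2n by (meson finite_Pow_iff finite_subset)
qed

lemma mem_G2_iff_card: "X \<in> G2 n k \<longleftrightarrow> F2.subspace X \<and> X \<subseteq> F2n n \<and> card X = 2 ^ k"
proof -
  have "dimF2 X = k \<longleftrightarrow> card X = 2 ^ k" if "F2.subspace X" "X \<subseteq> F2n n"
  proof -
    have "card X = 2 ^ dimF2 X" using that card_subspace_F2 finite_F2n finite_subset by blast
    then show ?thesis by simp
  qed
  then show ?thesis by (auto simp only: G2_def P2_def mem_Collect_eq)
qed

lemma subspace_card_2_eq:
  assumes "F2.subspace X" "card X = 2"
  obtains p where "p \<noteq> 0" "X = {0, p}"
proof -
  have "0 \<in> X" using assms(1) F2.subspace_0 by blast
  moreover have "finite X" by (rule card_ge_0_finite) (simp add: assms(2))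
  ultimately have "card (X - {0}) = 1" using assms(2) by simp
  then obtain p where "X - {0} = {p}" by (rule card_1_singletonE)
  then have "p \<noteq> 0" "X = {0, p}" using \<open>0 \<in> X\<close> by auto
  then show ?thesis by (rule that)
qed

lemma subspace_zero_pair: "F2.subspace {0, p}"
  by (rule F2.subspaceI) (use scaleF2_cases in auto)

lemma subspace_card_4_eq:
  assumes "F2.subspace X" "finite X" "card X = 4"
    and "u \<in> X" "v \<in> X" "u \<noteq> v" "u \<noteq> 0" "v \<noteq> 0"
  shows "X = {0, u, v, u + v}"
proof (rule card_subset_eq[symmetric, OF assms(2)])
  show "{0, u, v, u + v} \<subseteq> X" using assms F2.subspace_0 F2.subspace_add by blast
  have "u + v \<noteq> 0"
  proof
    assume "u + v = 0"
    then have "u + v + v = v" by simp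
    then show False using assms(6) by (simp add: add.assoc)
  qed
  then show "card {0, u, v, u + v} = card X" using assms(3,6-8) by auto
qed

lemma subspace_card_4_subset:
  assumes "F2.subspace X" "finite X" "card X = 4" "F2.subspace T"
    and "u \<in> X \<inter> T" "v \<in> X \<inter> T" "u \<noteq> v" "u \<noteq> 0" "v \<noteq> 0"
  shows "X \<subseteq> T"
  using subspace_card_4_eq[OF assms(1-3), of u v] assms(4-9)
    F2.subspace_0 F2.subspace_add by auto

lemma subspace_card_4_inter_card_le:
  assumes "F2.subspace X" "finite X" "card X = 4" "F2.subspace Y" "finite Y" "card Y = 4"
    and "X \<noteq> Y"
  shows "card (X \<inter> Y) \<le> 2"
proof (rule ccontr)
  assume "\<not> card (X \<inter> Y) \<le> 2"
  moreover have "0 \<in> X \<inter> Y" using assms(1,4) F2.subspace_0 by blast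
  ultimately have "\<not> card (X \<inter> Y - {0}) \<le> Suc 0" by simp
  then obtain u v where "u \<in> X \<inter> Y - {0}" "v \<in> X \<inter> Y - {0}" "u \<noteq> v"
    using card_le_Suc0_iff_eq[of "X \<inter> Y - {0}"] assms(2) by auto
  then show False using subspace_card_4_eq assms by (metis DiffE Int_iff singletonI)
qed

lemma card_mult_choose_two_le:
  assumes "finite S"
    and "\<And>X. X \<in> F \<Longrightarrow> X \<subseteq> S \<and> card X = k"
    and "\<And>X Y. X \<in> F \<Longrightarrow> Y \<in> F \<Longrightarrow> X \<noteq> Y \<Longrightarrow> card (X \<inter> Y) \<le> 1"
  shows "card F * (k choose 2) \<le> card S choose 2"
proof -
  define pairs where "pairs X = {A. A \<subseteq> X \<and> card A = 2}" for X :: "'a set"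
  have "F \<subseteq> Pow S" using assms(2) by blast
  then have finite_F: "finite F" using assms(1) by (meson finite_Pow_iff finite_subset)
  have finite_pairs: "finite (pairs X)" and card_pairs: "card (pairs X) = card X choose 2"
    if "X \<subseteq> S" for X
  proof -
    have "finite X" using that assms(1) finite_subset by blast
    then show "finite (pairs X)" "card (pairs X) = card X choose 2"
      unfolding pairs_def using n_subsets by auto
  qed
  have "pairs X \<inter> pairs Y = {}" if "X \<in> F" "Y \<in> F" "X \<noteq> Y" for X Y
  proof (rule ccontr)
    assume "pairs X \<inter> pairs Y \<noteq> {}"
    then obtain A where "A \<subseteq> X \<inter> Y" "card A = 2" unfolding pairs_def by auto
    then show False
      using assms that card_mono[of "X \<inter> Y" A] finite_subset[of "X \<inter> Y" S] by fastforce
  qed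
  then have "card (\<Union>X\<in>F. pairs X) = (\<Sum>X\<in>F. card (pairs X))"
    using finite_F finite_pairs assms(2) by (intro card_UN_disjoint) auto
  also have "\<dots> = card F * (k choose 2)" using card_pairs assms(2) by simp
  finally have "card F * (k choose 2) = card (\<Union>X\<in>F. pairs X)" ..
  also have "\<dots> \<le> card (pairs S)"
    using assms(1,2) by (intro card_mono) (auto simp: pairs_def)
  finally show ?thesis using card_pairs by simp
qed

lemma equidistant_2_nonzero_codewords:
  assumes "U \<subseteq> P2 n" "{0} \<in> U" "equidistant U 2"
  shows "U - {{0}} \<subseteq> G2 n 2"
    and "\<And>X Y. X \<in> U - {{0}} \<Longrightarrow> Y \<in> U - {{0}} \<Longrightarrow> X \<noteq> Y \<Longrightarrow> X \<inter> Y \<in> G2 n 1"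
proof -
  have dim_line: "dimF2 X = 2" if "X \<in> U - {{0}}" for X
  proof -
    have "X \<inter> {0} = {0}" using that assms(1) F2.subspace_0 by (auto simp: P2_def)
    moreover have "dS X {0} = 2" using assms(2,3) that by (auto simp: equidistant_def)
    ultimately show ?thesis by (simp add: dS_def)
  qed
  show "U - {{0}} \<subseteq> G2 n 2" using dim_line assms(1) by (auto simp: G2_def)
  fix X Y assume XY: "X \<in> U - {{0}}" "Y \<in> U - {{0}}" "X \<noteq> Y"
  then have "dS X Y = 2" using assms(3) by (auto simp: equidistant_def)
  then have "dimF2 (X \<inter> Y) = 1" using dim_line XY(1,2) by (simp add: dS_def)
  moreover have "X \<inter> Y \<in> P2 n" using XY(1,2) assms(1) F2.subspace_inter by (auto simp: P2_def)
  ultimately show "X \<inter> Y \<in> G2 n 1" by (simp add: G2_def)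
qed

lemma sunflower_if_common_point:
  assumes lines: "L \<subseteq> G2 n 2"
    and points: "\<And>X Y. X \<in> L \<Longrightarrow> Y \<in> L \<Longrightarrow> X \<noteq> Y \<Longrightarrow> X \<inter> Y \<in> G2 n 1"
    and "p \<noteq> 0" "\<And>X. X \<in> L \<Longrightarrow> p \<in> X" "L \<noteq> {}"
  shows "sunflower n L"
proof -
  obtain X0 where "X0 \<in> L" using assms(5) by blast
  then have "X0 \<in> G2 n 2" using lines by blast
  then have "X0 \<subseteq> F2n n" by (simp add: mem_G2_iff_card)
  then have "{0, p} \<subseteq> F2n n"
    using assms(4) \<open>X0 \<in> L\<close> F2.subspace_0[OF subspace_F2n] by blast
  then have "{0, p} \<in> G2 n 1" using subspace_zero_pair assms(3) by (simp add: mem_G2_iff_card)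
  moreover have "X \<inter> Y = {0, p}" if "X \<in> L" "Y \<in> L" "X \<noteq> Y" for X Y
  proof (rule card_subset_eq[symmetric])
    have "X \<inter> Y \<in> G2 n 1" using points that by blast
    then show "finite (X \<inter> Y)" "card {0, p} = card (X \<inter> Y)" "{0, p} \<subseteq> X \<inter> Y"
      using assms(3,4) that F2.subspace_0 finite_F2n finite_subset
      by (auto simp: mem_G2_iff_card)
  qed
  ultimately show ?thesis using lines unfolding sunflower_def by blast
qed

lemma plane_through_triangle:
  assumes lines: "L1 \<in> G2 n 2" "L2 \<in> G2 n 2" "L3 \<in> G2 n 2"
    and "p \<in> L1 \<inter> L2" "q \<in> L1 \<inter> L3" "r \<in> L2 \<inter> L3" "p \<noteq> 0" "q \<noteq> 0" "r \<noteq> 0"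
    and "L1 \<inter> L2 \<inter> L3 = {0}"
  obtains T where "T \<in> G2 n 3" "L1 \<subseteq> T" "L2 \<subseteq> T" "L3 \<subseteq> T"
proof -
  have line: "F2.subspace L \<and> finite L \<and> card L = 4 \<and> L \<subseteq> F2n n" if "L \<in> G2 n 2" for L
    using that finite_F2n finite_subset by (auto simp: mem_G2_iff_card)
  have "r \<notin> L1" using assms(6,9,10) by blast
  define T where "T = F2.span (insert r L1)"
  have "F2.subspace T" by (simp add: T_def)
  moreover have "T \<subseteq> F2n n"
    unfolding T_def using line lines(1,3) assms(6) subspace_F2n F2.span_minimal by blast
  moreover have "card T = 8"
  proof -
    have "F2.span L1 = L1" using line[OF lines(1)] by simp
    then have "card (F2.span (insert r L1)) = 2 * card L1"
      using card_span_insert_F2[of L1 r] line[OF lines(1)] \<open>r \<notin> L1\<close> by metis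
    then show ?thesis using line[OF lines(1)] by (simp add: T_def)
  qed
  ultimately have "T \<in> G2 n 3" by (simp add: mem_G2_iff_card)
  moreover have "L1 \<subseteq> T" "r \<in> T" unfolding T_def using F2.span_superset by blast+
  moreover have "L2 \<subseteq> T"
    using subspace_card_4_subset[of L2 T p r] line[OF lines(2)] \<open>F2.subspace T\<close>
      \<open>L1 \<subseteq> T\<close> \<open>r \<in> T\<close> \<open>r \<notin> L1\<close> assms(4,6,7,9) by blast
  moreover have "L3 \<subseteq> T"
    using subspace_card_4_subset[of L3 T q r] line[OF lines(3)] \<open>F2.subspace T\<close>
      \<open>L1 \<subseteq> T\<close> \<open>r \<in> T\<close> \<open>r \<notin> L1\<close> assms(5,6,8,9) by blast
  ultimately show ?thesis using that by blast
qed

lemma line_subset_if_meets_triangle: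
  assumes "X \<in> G2 n 2" "F2.subspace T" "L1 \<subseteq> T" "L2 \<subseteq> T" "L3 \<subseteq> T" "L1 \<inter> L2 \<inter> L3 = {0}"
    and meets: "\<And>L. L \<in> {L1, L2, L3} \<Longrightarrow> \<exists>x. x \<noteq> 0 \<and> x \<in> X \<inter> L"
  shows "X \<subseteq> T"
proof -
  obtain x1 x2 x3 where x: "x1 \<in> X \<inter> L1" "x2 \<in> X \<inter> L2" "x3 \<in> X \<inter> L3" "x1 \<noteq> 0" "x2 \<noteq> 0" "x3 \<noteq> 0"
    using meets by (metis insertCI)
  then have "x1 \<noteq> x2 \<or> x1 \<noteq> x3" using assms(6) by blast
  then obtain u v where "u \<in> X \<inter> T" "v \<in> X \<inter> T" "u \<noteq> v" "u \<noteq> 0" "v \<noteq> 0"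
    using x assms(3-5) by blast
  moreover have "F2.subspace X" "finite X" "card X = 4"
    using assms(1) finite_F2n finite_subset by (auto simp: mem_G2_iff_card)
  ultimately show ?thesis using subspace_card_4_subset assms(2) by blast
qed

lemma coplanar_if_not_concurrent:
  assumes lines: "L \<subseteq> G2 n 2"
    and points: "\<And>X Y. X \<in> L \<Longrightarrow> Y \<in> L \<Longrightarrow> X \<noteq> Y \<Longrightarrow> X \<inter> Y \<in> G2 n 1"
    and not_concurrent: "\<nexists>p. p \<noteq> 0 \<and> (\<forall>X\<in>L. p \<in> X)"
  obtains T where "T \<in> G2 n 3" "\<And>X. X \<in> L \<Longrightarrow> X \<subseteq> T"
proof -
  have point: "\<exists>p. p \<noteq> 0 \<and> X \<inter> Y = {0, p}" if "X \<in> L" "Y \<in> L" "X \<noteq> Y" for X Y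
    using points[OF that] subspace_card_2_eq by (metis mem_G2_iff_card power_one_right)
  have meet: "\<exists>x. x \<noteq> 0 \<and> x \<in> X \<inter> Y" if "X \<in> L" "Y \<in> L" for X Y
  proof (cases "X = Y")
    case True
    have "card X = 4" using lines that(1) by (auto simp: mem_G2_iff_card)
    then have "\<not> X \<subseteq> {0}" using card_mono[of "{0}" X] by auto
    then show ?thesis using True by blast
  next
    case False
    then show ?thesis using point that by blast
  qed
  \<comment> \<open>An empty family would be concurrent, so L has a member.\<close>
  have "(\<lambda>_. 1) \<noteq> (0 :: nat \<Rightarrow> bit)" by (simp add: fun_eq_iff)
  then obtain L1 where L1: "L1 \<in> L" using not_concurrent by blast
  then obtain p0 where "p0 \<noteq> 0" "p0 \<in> L1" using meet by blast
  then obtain L2 where L2: "L2 \<in> L" "L1 \<noteq> L2" using not_concurrent by blast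
  then obtain p where p: "p \<noteq> 0" "L1 \<inter> L2 = {0, p}" using point L1 by blast
  then obtain L3 where L3: "L3 \<in> L" "p \<notin> L3" using not_concurrent by blast
  have "0 \<in> L3" using L3(1) lines F2.subspace_0 by (auto simp: mem_G2_iff_card)
  then have triangle: "L1 \<inter> L2 \<inter> L3 = {0}" using p(2) L3(2) by blast
  obtain q r where "q \<in> L1 \<inter> L3" "r \<in> L2 \<inter> L3" "q \<noteq> 0" "r \<noteq> 0"
    using meet L1 L2(1) L3(1) by blast
  then obtain T where T: "T \<in> G2 n 3" "L1 \<subseteq> T" "L2 \<subseteq> T" "L3 \<subseteq> T"
    using plane_through_triangle[of L1 n L2 L3 p q r] L1 L2(1) L3(1) lines p triangle by blast
  have "F2.subspace T" using T(1) by (simp add: mem_G2_iff_card)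
  have "X \<subseteq> T" if X: "X \<in> L" for X
  proof (rule line_subset_if_meets_triangle[OF _ \<open>F2.subspace T\<close> T(2-4) triangle])
    show "X \<in> G2 n 2" using X lines by blast
    show "\<exists>x. x \<noteq> 0 \<and> x \<in> X \<inter> L'" if "L' \<in> {L1, L2, L3}" for L'
      using meet[OF X, of L'] that L1 L2(1) L3(1) by blast
  qed
  then show ?thesis using that T(1) by blast
qed

lemma card_lines_in_plane_le:
  assumes "T \<in> G2 n 3"
  shows "card {Y \<in> G2 n 2. Y \<subset> T} \<le> 7"
proof -
  let ?lines = "{Y \<in> G2 n 2. Y \<subset> T}"
  have T: "F2.subspace T" "finite T" "card T = 8"
    using assms finite_F2n finite_subset by (auto simp: mem_G2_iff_card)
  have line: "F2.subspace Y \<and> finite Y \<and> card Y = 4 \<and> 0 \<in> Y \<and> Y \<subseteq> T" if "Y \<in> ?lines" for Y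
    using that T(2) finite_subset F2.subspace_0 by (auto simp: mem_G2_iff_card)
  have "inj_on (\<lambda>Y. Y - {0}) ?lines"
    using line by (intro inj_onI) (metis insert_Diff)
  then have "card ?lines = card ((\<lambda>Y. Y - {0}) ` ?lines)" by (simp add: card_image)
  moreover have "card ((\<lambda>Y. Y - {0}) ` ?lines) * (3 choose 2) \<le> card (T - {0}) choose 2"
  proof (rule card_mult_choose_two_le)
    show "finite (T - {0})" using T(2) by simp
    show "Y' \<subseteq> T - {0} \<and> card Y' = 3" if Y': "Y' \<in> (\<lambda>Y. Y - {0}) ` ?lines" for Y'
    proof -
      obtain Y where "Y \<in> ?lines" "Y' = Y - {0}" using Y' by blast
      then show ?thesis using line[of Y] by auto
    qed
    show "card (Y' \<inter> Z') \<le> 1"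
      if YZ': "Y' \<in> (\<lambda>Y. Y - {0}) ` ?lines" "Z' \<in> (\<lambda>Y. Y - {0}) ` ?lines" "Y' \<noteq> Z'"
      for Y' Z'
    proof -
      obtain Y Z where "Y \<in> ?lines" "Z \<in> ?lines" "Y \<noteq> Z" "Y' \<inter> Z' = (Y \<inter> Z) - {0}"
        using YZ' by auto
      moreover have "card (Y \<inter> Z) \<le> 2"
        using subspace_card_4_inter_card_le line calculation(1-3) by blast
      ultimately show ?thesis using line by (simp add: card_Diff_singleton_if)
    qed
  qed
  moreover have "card (T - {0}) = 7" using T F2.subspace_0 by simp
  ultimately show ?thesis by (simp add: numeral_eq_Suc)
qed

lemma lines_of_plane_eq_if_card_ge:
  assumes "T \<in> G2 n 3" "L \<subseteq> G2 n 2" "\<And>X. X \<in> L \<Longrightarrow> X \<subseteq> T" "7 \<le> card L"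
  shows "L = {Y \<in> G2 n 2. Y \<subset> T}" and "card L = 7"
proof -
  have "L \<subseteq> {Y \<in> G2 n 2. Y \<subset> T}"
  proof
    fix X assume "X \<in> L"
    then have "dimF2 X \<noteq> dimF2 T" using assms(1,2) by (auto simp: G2_def)
    then show "X \<in> {Y \<in> G2 n 2. Y \<subset> T}" using assms(2,3) \<open>X \<in> L\<close> by auto
  qed
  moreover have "finite {Y \<in> G2 n 2. Y \<subset> T}" using finite_G2 by simp
  moreover have "card {Y \<in> G2 n 2. Y \<subset> T} \<le> card L"
    using card_lines_in_plane_le[OF assms(1)] assms(4) by linarith
  ultimately show L_eq: "L = {Y \<in> G2 n 2. Y \<subset> T}" using card_seteq by blast
  show "card L = 7" using card_lines_in_plane_le[OF assms(1)] assms(4) unfolding L_eq by simp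
qed

theorem proposition2:
  fixes n :: nat and U :: "(nat \<Rightarrow> bit) set set"
  assumes "n \<ge> 4"
    and "linear_code n U"
    and "equidistant U 2"
    and "card U = 2 ^ (n - 1)"
  shows "sunflower n (U - {{0}}) \<or>
         (n = 4 \<and> (\<exists>T\<in>G2 4 3. U - {{0}} = {Y \<in> G2 4 2. Y \<subset> T}))"
proof -
  define L where "L = U - {{0}}"
  have "U \<subseteq> P2 n" "{0} \<in> U" using assms(2) by (auto simp: linear_code_def)
  note lines = equidistant_2_nonzero_codewords(1)[OF this assms(3), folded L_def]
    and points = equidistant_2_nonzero_codewords(2)[OF this assms(3), folded L_def]
  have "finite U" using assms(4) card_ge_0_finite by force
  then have card_L: "card L = 2 ^ (n - 1) - 1" using assms(4) \<open>{0} \<in> U\<close> by (simp add: L_def)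
  moreover have "(2::nat) ^ 3 \<le> 2 ^ (n - 1)" using assms(1) by (intro power_increasing) auto
  ultimately have "7 \<le> card L" by simp
  show ?thesis
  proof (cases "\<exists>p. p \<noteq> 0 \<and> (\<forall>X\<in>L. p \<in> X)")
    case True
    then obtain p where "p \<noteq> 0" "\<And>X. X \<in> L \<Longrightarrow> p \<in> X" by blast
    moreover have "L \<noteq> {}" using \<open>7 \<le> card L\<close> by auto
    ultimately have "sunflower n L" using sunflower_if_common_point[OF lines points] by blast
    then show ?thesis unfolding L_def ..
  next
    case False
    then obtain T where T: "T \<in> G2 n 3" "\<And>X. X \<in> L \<Longrightarrow> X \<subseteq> T"
      using coplanar_if_not_concurrent[OF lines points] by blast
    note plane = lines_of_plane_eq_if_card_ge[OF T(1) lines T(2) \<open>7 \<le> card L\<close>]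
    have "(2::nat) ^ (n - 1) = 2 ^ 3" using plane(2) card_L by simp
    then have "n = 4" using power_inject_exp[of "2::nat" "n - 1" 3] assms(1) by simp
    then show ?thesis using T(1) plane(1) unfolding L_def by blast
  qed
qed

end
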